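(* Let $A$ be the symmetric circulant $5\times5$ matrix with first row $(8,5,1,1,5)$ (i.e. $a_{ii}=8$, $a_{ij}=5$ if $j\equiv i\pm1 \pmod 5$, $a_{ij}=1$ otherwise), and let $A'$ be the symmetric circulant $5\times 5$ matrix with first row $(6,4,1,1,4)$. Then $A$ is completely positive, has exactly two minimal CP factorizations, and has infinitely many CP factorizations; and $A'$ is completely positive with the unique CP factorization $A'=W^2(W^2)^T$, where $W$ is the $5\times5$ matrix whose $i$-th column is $\mathbf e_i+\mathbf e_{i\oplus1}$ ($\oplus$ denoting addition modulo $5$ on $\{1,\dots,5\}$), so that $W^2$ is the circulant matrix with first row $(1,0,0,1,2)$.
   Context: A symmetric $n\times n$ matrix $A$ is completely positive if $A=BB^T$ for some entrywise nonnegative $n\times k$ matrix $B$; such an equality is a CP factorization of $A$. Only CP factorizations in which the columns of $B$ are pairwise linearly independent are considered, and two CP factorizations $A=BB^T=CC^T$ are considered equal if $C=BP$ for a permutation matrix $P$. The cp-rank of $A$ is the minimal number of columns of such a nonnegative $B$; a CP factorization with that many columns is called minimal. $\mathbf e_1,\dots,\mathbf e_5$ are the standard basis vectors of $\mathbb R^5$. *)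

theory Defs
  imports Main "HOL-Combinatorics.Permutations" Complex_Main
begin

text \<open>Matrices are represented as functions nat => nat => real; an n x k matrix
  is indexed by rows 0..n-1 and columns 0..k-1 (0-based indices).\<close>

definition nonneg_mat :: "nat \<Rightarrow> nat \<Rightarrow> (nat \<Rightarrow> nat \<Rightarrow> real) \<Rightarrow> bool" where
  "nonneg_mat n k B \<longleftrightarrow> (\<forall>i<n. \<forall>j<k. B i j \<ge> 0)"

definition is_BBT :: "nat \<Rightarrow> (nat \<Rightarrow> nat \<Rightarrow> real) \<Rightarrow> nat \<Rightarrow> (nat \<Rightarrow> nat \<Rightarrow> real) \<Rightarrow> bool" where
  "is_BBT n A k B \<longleftrightarrow> (\<forall>i<n. \<forall>j<n. A i j = (\<Sum>l<k. B i l * B j l))"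

definition completely_positive :: "nat \<Rightarrow> (nat \<Rightarrow> nat \<Rightarrow> real) \<Rightarrow> bool" where
  "completely_positive n A \<longleftrightarrow>
     (\<forall>i<n. \<forall>j<n. A i j = A j i) \<and> (\<exists>k B. nonneg_mat n k B \<and> is_BBT n A k B)"

definition cp_rank :: "nat \<Rightarrow> (nat \<Rightarrow> nat \<Rightarrow> real) \<Rightarrow> nat" where
  "cp_rank n A = (LEAST k. \<exists>B. nonneg_mat n k B \<and> is_BBT n A k B)"

definition cols_lin_indep :: "nat \<Rightarrow> (nat \<Rightarrow> nat \<Rightarrow> real) \<Rightarrow> nat \<Rightarrow> nat \<Rightarrow> bool" where
  "cols_lin_indep n B j j' \<longleftrightarrow>
     (\<forall>a b. (\<forall>i<n. a * B i j + b * B i j' = 0) \<longrightarrow> a = 0 \<and> b = 0)"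

definition cp_factorizations :: "nat \<Rightarrow> (nat \<Rightarrow> nat \<Rightarrow> real) \<Rightarrow> (nat \<times> (nat \<Rightarrow> nat \<Rightarrow> real)) set" where
  "cp_factorizations n A = {(k, B). nonneg_mat n k B \<and> is_BBT n A k B \<and>
      (\<forall>j<k. \<forall>j'<k. j \<noteq> j' \<longrightarrow> cols_lin_indep n B j j') \<and>
      (\<forall>i j. \<not> (i < n \<and> j < k) \<longrightarrow> B i j = 0)}"

definition minimal_cp_factorizations :: "nat \<Rightarrow> (nat \<Rightarrow> nat \<Rightarrow> real) \<Rightarrow> (nat \<times> (nat \<Rightarrow> nat \<Rightarrow> real)) set" where
  "minimal_cp_factorizations n A = {(k, B) \<in> cp_factorizations n A. k = cp_rank n A}"

definition cp_equiv :: "nat \<Rightarrow> ((nat \<times> (nat \<Rightarrow> nat \<Rightarrow> real)) \<times> (nat \<times> (nat \<Rightarrow> nat \<Rightarrow> real))) set" where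
  "cp_equiv n = {((k, B), (k', C)). k = k' \<and>
      (\<exists>p. p permutes {..<k} \<and> (\<forall>i<n. \<forall>j<k. C i j = B i (p j)))}"

text \<open>Symmetric circulant 5 x 5 matrix with first row (d, a, b, b, a).\<close>
definition circ5 :: "real \<Rightarrow> real \<Rightarrow> real \<Rightarrow> nat \<Rightarrow> nat \<Rightarrow> real" where
  "circ5 d a b i j = (if i < 5 \<and> j < 5 then
      (if i = j then d else if j = (i + 1) mod 5 \<or> i = (j + 1) mod 5 then a else b)
    else 0)"

definition W5 :: "nat \<Rightarrow> nat \<Rightarrow> real" where
  "W5 i j = (if i < 5 \<and> j < 5 \<and> (i = j \<or> i = (j + 1) mod 5) then 1 else 0)"

definition W5sq :: "nat \<Rightarrow> nat \<Rightarrow> real" where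
  "W5sq i j = (if i < 5 \<and> j < 5 then (\<Sum>l<5. W5 i l * W5 l j) else 0)"

end

(* A' and A are orthogonal to the Horn matrix H, the circulant with first row (1,-1,1,1,-1).
   H is copositive and its nonnegative zeros are exactly the vectors
   s (e_i + e_(i+1)) + t (e_(i+1) + e_(i+2)), so every column of a nonnegative factor is
   such a "window". Nonzero entries A_(i,i+2) force a window at every position, hence at
   least five columns. For A', comparing the sums of the first and second off-diagonals
   forces s = t in every window, which pins the factor down to W^2 up to column order.
   For a five-column factor of A the window weights satisfy s_(i+1)^2 = 3 - 1/s_i^2; this
   map is increasing, so the 5-periodic orbit is a fixed point and s_i^2 is the square of
   the golden ratio or of its inverse, giving exactly two minimal factorizations F and G.
   Juxtaposing sqrt x F and sqrt (1 - x) G gives, for each 0 < x < 1, a factorization with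
   ten columns, and different x give inequivalent factorizations. *)
theory Submission
  imports Defs
begin

lemma completely_positiveI:
  assumes "(k, B) \<in> cp_factorizations n A"
  shows "completely_positive n A"
  using assms by (auto simp: completely_positive_def cp_factorizations_def is_BBT_def mult.commute)

lemma cols_lin_indep_of_minor:
  assumes "i < n" "i' < n" "B i j * B i' j' \<noteq> B i' j * B i j'"
  shows "cols_lin_indep n B j j'"
  unfolding cols_lin_indep_def
proof (intro allI impI)
  fix a b assume h: "\<forall>i<n. a * B i j + b * B i j' = 0"
  have e: "a * B i j + b * B i j' = 0" "a * B i' j + b * B i' j' = 0" using h assms by auto
  let ?D = "B i j * B i' j' - B i' j * B i j'"
  have "a * ?D = B i' j' * (a * B i j + b * B i j') - B i j' * (a * B i' j + b * B i' j')"
    "b * ?D = B i j * (a * B i' j + b * B i' j') - B i' j * (a * B i j + b * B i j')"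
    by (simp_all add: algebra_simps)
  then have "a * ?D = 0" "b * ?D = 0" using e by simp_all
  then show "a = 0 \<and> b = 0" using assms(3) by simp
qed

lemma cp_equivI:
  assumes "p permutes {..<k}" "\<forall>i<n. \<forall>j<k. C i j = B i (p j)"
  shows "((k, B), (k, C)) \<in> cp_equiv n"
  using assms by (auto simp: cp_equiv_def)

lemma cp_equiv_reindexI:
  assumes w: "w ` {..<k} = {..<k}" and C: "\<forall>i<n. \<forall>j<k. C i j = B i (w j)"
  shows "((k, B), (k, C)) \<in> cp_equiv n"
proof (rule cp_equivI)
  have "bij_betw w {..<k} {..<k}"
    using w by (simp add: bij_betw_def eq_card_imp_inj_on)
  then have "bij_betw (\<lambda>j. if j < k then w j else j) {..<k} {..<k}"
    by (rule bij_betw_cong[THEN iffD1, rotated]) auto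
  then show "(\<lambda>j. if j < k then w j else j) permutes {..<k}"
    by (rule bij_imp_permutes) auto
qed (use C in simp)

lemma equiv_cp_equiv: "equiv UNIV (cp_equiv n)"
proof (rule equivI)
  show "refl (cp_equiv n)"
  proof (rule refl_onI)
    fix x :: "nat \<times> (nat \<Rightarrow> nat \<Rightarrow> real)"
    show "(x, x) \<in> cp_equiv n"
      using cp_equivI[OF permutes_id, where C = "snd x" and B = "snd x" and n = n] by (cases x) simp
  qed
  show "sym (cp_equiv n)"
  proof (rule symI)
    fix x y assume "(x, y) \<in> cp_equiv n"
    then obtain k B C p where xy: "x = (k, B)" "y = (k, C)" and p: "p permutes {..<k}"
      and C: "\<forall>i<n. \<forall>j<k. C i j = B i (p j)"
      by (auto simp: cp_equiv_def)
    have "\<forall>i<n. \<forall>j<k. B i j = C i (inv p j)"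
      using C permutes_in_image[OF permutes_inv[OF p]] permutes_inverses(1)[OF p] by simp
    then show "(y, x) \<in> cp_equiv n"
      unfolding xy by (rule cp_equivI[OF permutes_inv[OF p]])
  qed
  show "trans (cp_equiv n)"
  proof (rule transI)
    fix x y z assume "(x, y) \<in> cp_equiv n" "(y, z) \<in> cp_equiv n"
    then obtain k B C D p q where xyz: "x = (k, B)" "y = (k, C)" "z = (k, D)"
      and p: "p permutes {..<k}" and q: "q permutes {..<k}"
      and C: "\<forall>i<n. \<forall>j<k. C i j = B i (p j)" and D: "\<forall>i<n. \<forall>j<k. D i j = C i (q j)"
      by (auto simp: cp_equiv_def)
    have "\<forall>i<n. \<forall>j<k. D i j = B i ((p \<circ> q) j)"
      using C D permutes_in_image[OF q] by simp
    then show "(x, z) \<in> cp_equiv n"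
      unfolding xyz by (rule cp_equivI[OF permutes_compose[OF q p]])
  qed
qed simp

lemma quotient_cp_equiv_eq:
  assumes "R \<subseteq> S" and "\<And>x. x \<in> S \<Longrightarrow> \<exists>r\<in>R. (r, x) \<in> cp_equiv n"
  shows "S // cp_equiv n = (\<lambda>r. cp_equiv n `` {r}) ` R"
proof
  show "S // cp_equiv n \<subseteq> (\<lambda>r. cp_equiv n `` {r}) ` R"
  proof
    fix X assume "X \<in> S // cp_equiv n"
    then obtain x where x: "x \<in> S" and X: "X = cp_equiv n `` {x}" by (rule quotientE)
    obtain r where "r \<in> R" "(r, x) \<in> cp_equiv n" using assms(2)[OF x] by blast
    then show "X \<in> (\<lambda>r. cp_equiv n `` {r}) ` R"
      unfolding X using equiv_class_eq[OF equiv_cp_equiv] by (metis image_eqI)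
  qed
  show "(\<lambda>r. cp_equiv n `` {r}) ` R \<subseteq> S // cp_equiv n"
    using assms(1) by (auto intro: quotientI)
qed


section \<open>Window vectors and the Horn form\<close>

lemma less_5_cases: "(i::nat) < 5 \<Longrightarrow> i = 0 \<or> i = 1 \<or> i = 2 \<or> i = 3 \<or> i = 4"
  by auto

lemma sum_lessThan_5: "(\<Sum>i<5::nat. f i) = f 0 + f 1 + f 2 + f 3 + (f 4::real)"
  by (simp add: eval_nat_numeral)

lemma all_less_5I: "P 0 \<Longrightarrow> P 1 \<Longrightarrow> P 2 \<Longrightarrow> P 3 \<Longrightarrow> P 4 \<Longrightarrow> \<forall>i<(5::nat). P i"
  by (metis less_5_cases)

text \<open>For \<open>s, t \<ge> 0\<close> this is the nonnegative combination of the consecutive columns \<open>w\<close>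
  and \<open>w + 1\<close> (mod 5) of \<open>W5\<close> with weights \<open>s\<close> and \<open>t\<close>.\<close>
definition window :: "nat \<Rightarrow> real \<Rightarrow> real \<Rightarrow> nat \<Rightarrow> real" where
  "window w s t i = (if i = w then s else if i = Suc w mod 5 then s + t
     else if i = Suc (Suc w) mod 5 then t else 0)"

lemma mult_window: "c * window w s t i = window w (c * s) (c * t) i"
  by (simp add: window_def distrib_left)

lemma window_mult_window_eq_0:
  assumes "w < 5" "w' < 5" "w \<noteq> w'"
  shows "window w s t w' * window w' s' t' w = 0"
  using less_5_cases[OF assms(1)] less_5_cases[OF assms(2)] assms(3)
  by (elim disjE; simp add: window_def)

lemma window_mult_shift2:
  assumes "w < 5" "i < 5"
  shows "window w s t i * window w s t ((i + 2) mod 5) = (if w = i then s * t else 0)"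
  using less_5_cases[OF assms(1)] less_5_cases[OF assms(2)] by (elim disjE; simp add: window_def)

lemma sum_window_mult_shift1:
  assumes "w < 5"
  shows "(\<Sum>i<5. window w s t i * window w s t ((i + 1) mod 5)) = (s + t)\<^sup>2"
  using less_5_cases[OF assms]
  by (elim disjE; simp add: sum_lessThan_5 window_def power2_eq_square algebra_simps)

lemma sum_window_mult_shift2:
  assumes "w < 5"
  shows "(\<Sum>i<5. window w s t i * window w s t ((i + 2) mod 5)) = s * t"
  using less_5_cases[OF assms] by (elim disjE; simp add: sum_lessThan_5 window_def)

lemma window_eq_windowD:
  assumes "w < 5" "w' < 5" "s > 0" "t > 0" and eq: "\<forall>i<5. window w s t i = window w' s' t' i"
  shows "w = w' \<and> s = s' \<and> t = t'"
  using less_5_cases[OF assms(1)] less_5_cases[OF assms(2)] assms(3,4)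
    eq[rule_format, of 0] eq[rule_format, of 1] eq[rule_format, of 2] eq[rule_format, of 3]
    eq[rule_format, of 4]
  by (elim disjE; simp add: window_def)

definition horn_form :: "(nat \<Rightarrow> real) \<Rightarrow> real" where
  "horn_form x = x 0 * x 0 + x 1 * x 1 + x 2 * x 2 + x 3 * x 3 + x 4 * x 4
     + 2 * (x 0 * x 2 + x 1 * x 3 + x 2 * x 4 + x 3 * x 0 + x 4 * x 1)
     - 2 * (x 0 * x 1 + x 1 * x 2 + x 2 * x 3 + x 3 * x 4 + x 4 * x 0)"

text \<open>Two certificates of copositivity, for \<open>x 3 \<le> x 4\<close> and for \<open>x 4 \<le> x 3\<close>.\<close>
lemma horn_form_eq1:
  "horn_form x = (x 0 - x 1 + x 2 + x 3 - x 4)\<^sup>2 + 4 * (x 1 * x 3) + 4 * (x 2 * (x 4 - x 3))"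
  by (simp add: horn_form_def power2_eq_square algebra_simps)

lemma horn_form_eq2:
  "horn_form x = (x 0 - x 1 + x 2 - x 3 + x 4)\<^sup>2 + 4 * (x 1 * x 4) + 4 * (x 0 * (x 3 - x 4))"
  by (simp add: horn_form_def power2_eq_square algebra_simps)

lemma horn_form_nonneg:
  assumes "\<forall>i<5. x i \<ge> 0"
  shows "horn_form x \<ge> 0"
proof (cases "x 3 \<le> x 4")
  case True
  have "x 1 * x 3 \<ge> 0" "x 2 * (x 4 - x 3) \<ge> 0" using assms True by simp_all
  then show ?thesis unfolding horn_form_eq1 by simp
next
  case False
  have "x 1 * x 4 \<ge> 0" "x 0 * (x 3 - x 4) \<ge> 0" using assms False by simp_all
  then show ?thesis unfolding horn_form_eq2 by simp
qed

lemma horn_form_eq_0_imp_window: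
  assumes "\<forall>i<5. x i \<ge> 0" and zero: "horn_form x = 0"
  shows "\<exists>w<5. \<exists>s\<ge>0. \<exists>t\<ge>0. \<forall>i<5. x i = window w s t i"
proof -
  have x: "x 0 \<ge> 0" "x 1 \<ge> 0" "x 2 \<ge> 0" "x 3 \<ge> 0" "x 4 \<ge> 0" using assms(1) by auto
  have windowI: "\<exists>w<5. \<exists>s\<ge>0. \<exists>t\<ge>0. \<forall>i<5. x i = window w s t i"
    if "w < 5" "s \<ge> 0" "t \<ge> 0" "\<forall>i<5. x i = window w s t i" for w s t
    using that by blast
  show ?thesis
  proof (cases "x 3 \<le> x 4")
    case True
    have "x 1 * x 3 \<ge> 0" "x 2 * (x 4 - x 3) \<ge> 0" using x True by simp_all
    then have "(x 0 - x 1 + x 2 + x 3 - x 4)\<^sup>2 = 0" "x 1 * x 3 = 0" "x 2 * (x 4 - x 3) = 0"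
      using zero horn_form_eq1[of x] zero_le_power2[of "x 0 - x 1 + x 2 + x 3 - x 4"] by linarith+
    then have lin: "x 0 - x 1 + x 2 + x 3 - x 4 = 0" and "x 1 = 0 \<or> x 3 = 0"
      and "x 2 = 0 \<or> x 4 = x 3" by simp_all
    then consider "x 1 = 0" "x 2 = 0" | "x 3 = 0" "x 2 = 0" | "x 3 = 0" "x 4 = 0"
      using x by fastforce
    then show ?thesis
    proof cases
      case 1
      then show ?thesis
        using x lin by (intro windowI[of 3 "x 3" "x 0"] all_less_5I) (simp_all add: window_def)
    next
      case 2
      then show ?thesis
        using x lin by (intro windowI[of 4 "x 4" "x 1"] all_less_5I) (simp_all add: window_def)
    next
      case 3
      then show ?thesis
        using x lin by (intro windowI[of 0 "x 0" "x 2"] all_less_5I) (simp_all add: window_def)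
    qed
  next
    case False
    have "x 1 * x 4 \<ge> 0" "x 0 * (x 3 - x 4) \<ge> 0" using x False by simp_all
    then have "(x 0 - x 1 + x 2 - x 3 + x 4)\<^sup>2 = 0" "x 1 * x 4 = 0" "x 0 * (x 3 - x 4) = 0"
      using zero horn_form_eq2[of x] zero_le_power2[of "x 0 - x 1 + x 2 - x 3 + x 4"] by linarith+
    then have lin: "x 0 - x 1 + x 2 - x 3 + x 4 = 0" and "x 1 = 0 \<or> x 4 = 0"
      and "x 0 = 0 \<or> x 3 = x 4" by simp_all
    then consider "x 1 = 0" "x 0 = 0" | "x 4 = 0" "x 0 = 0" | "x 4 = 0" "x 3 = 0"
      using x False by fastforce
    then show ?thesis
    proof cases
      case 1
      then show ?thesis
        using x lin by (intro windowI[of 2 "x 2" "x 4"] all_less_5I) (simp_all add: window_def)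
    next
      case 2
      then show ?thesis
        using x lin by (intro windowI[of 1 "x 1" "x 3"] all_less_5I) (simp_all add: window_def)
    next
      case 3
      then show ?thesis
        using x lin by (intro windowI[of 0 "x 0" "x 2"] all_less_5I) (simp_all add: window_def)
    qed
  qed
qed


definition window_factor ::
  "nat \<Rightarrow> (nat \<Rightarrow> nat \<Rightarrow> real) \<Rightarrow> (nat \<Rightarrow> nat) \<Rightarrow> (nat \<Rightarrow> real) \<Rightarrow> (nat \<Rightarrow> real) \<Rightarrow> bool" where
  "window_factor k B w s t \<longleftrightarrow>
     (\<forall>l<k. w l < 5 \<and> s l \<ge> 0 \<and> t l \<ge> 0 \<and> (\<forall>i<5. B i l = window (w l) (s l) (t l) i))"

lemma sum_horn_form_columns:
  assumes "is_BBT 5 A k B"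
  shows "(\<Sum>l<k. horn_form (\<lambda>i. B i l)) = A 0 0 + A 1 1 + A 2 2 + A 3 3 + A 4 4
    + 2 * (A 0 2 + A 1 3 + A 2 4 + A 3 0 + A 4 1) - 2 * (A 0 1 + A 1 2 + A 2 3 + A 3 4 + A 4 0)"
proof -
  have A: "\<And>i j. i < 5 \<Longrightarrow> j < 5 \<Longrightarrow> A i j = (\<Sum>l<k. B i l * B j l)"
    using assms by (simp add: is_BBT_def)
  show ?thesis
    unfolding horn_form_def sum.distrib sum_subtractf sum_distrib_left[symmetric] by (simp add: A)
qed

lemma window_factor_exists:
  assumes nonneg: "nonneg_mat 5 k B" and zero: "(\<Sum>l<k. horn_form (\<lambda>i. B i l)) = 0"
  shows "\<exists>w s t. window_factor k B w s t"
proof -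
  have col: "\<forall>i<5. B i l \<ge> 0" if "l < k" for l
    using nonneg that by (simp add: nonneg_mat_def)
  have "\<forall>l\<in>{..<k}. horn_form (\<lambda>i. B i l) = 0"
    using sum_nonneg_eq_0_iff[of "{..<k}" "\<lambda>l. horn_form (\<lambda>i. B i l)"] zero col horn_form_nonneg
    by simp
  then have "\<forall>l<k. \<exists>w<5. \<exists>s\<ge>0. \<exists>t\<ge>0. \<forall>i<5. B i l = window w s t i"
    using col horn_form_eq_0_imp_window by simp
  then have "\<exists>w s t. \<forall>l<k. w l < 5 \<and> s l \<ge> 0 \<and> t l \<ge> 0 \<and> (\<forall>i<5. B i l = window (w l) (s l) (t l) i)"
    by metis
  then show ?thesis unfolding window_factor_def .
qed

lemma shift2_entry_window_factor:
  assumes B: "window_factor k B w s t" and A: "is_BBT 5 A k B" and i: "i < 5"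
  shows "A i ((i + 2) mod 5) = (\<Sum>l<k. if w l = i then s l * t l else 0)"
proof -
  have "A i ((i + 2) mod 5) = (\<Sum>l<k. B i l * B ((i + 2) mod 5) l)"
    using A i by (simp add: is_BBT_def)
  also have "\<dots> = (\<Sum>l<k. if w l = i then s l * t l else 0)"
  proof (rule sum.cong)
    fix l assume "l \<in> {..<k}"
    then have "w l < 5" "B i l = window (w l) (s l) (t l) i"
      "B ((i + 2) mod 5) l = window (w l) (s l) (t l) ((i + 2) mod 5)"
      using B i by (simp_all add: window_factor_def)
    then show "B i l * B ((i + 2) mod 5) l = (if w l = i then s l * t l else 0)"
      using window_mult_shift2[OF _ i] by simp
  qed simp
  finally show ?thesis .
qed

text \<open>A nonzero entry \<open>A\<^sub>i\<^sub>,\<^sub>i\<^sub>+\<^sub>2\<close> needs a window starting at \<open>i\<close>.\<close>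
lemma window_factor_image:
  assumes B: "window_factor k B w s t" and A: "is_BBT 5 A k B"
    and nz: "\<forall>i<5. A i ((i + 2) mod 5) \<noteq> 0"
  shows "w ` {..<k} = {..<5}"
proof
  show "w ` {..<k} \<subseteq> {..<5}" using B by (auto simp: window_factor_def)
  show "{..<5} \<subseteq> w ` {..<k}"
  proof
    fix i assume "i \<in> {..<5::nat}"
    then have "(\<Sum>l<k. if w l = i then s l * t l else 0) \<noteq> 0"
      using shift2_entry_window_factor[OF B A] nz by simp
    then show "i \<in> w ` {..<k}" by (force intro: sum.neutral)
  qed
qed

lemma circ5_shift2: "j < 5 \<Longrightarrow> circ5 d a b j ((j + 2) mod 5) = b"
  by (auto simp: circ5_def dest: less_5_cases)

lemma circ5_shift1: "j < 5 \<Longrightarrow> circ5 d a b ((j + 1) mod 5) ((j + 2) mod 5) = a"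
  by (auto simp: circ5_def dest: less_5_cases)

text \<open>The hypothesis \<open>d + 2 b = 2 a\<close> says that \<open>circ5 d a b\<close> is orthogonal to the Horn matrix.\<close>
lemma circ5_window_factor:
  assumes horn: "d + 2 * b = 2 * a" and b: "b \<noteq> 0"
    and nonneg: "nonneg_mat 5 k B" and A: "is_BBT 5 (circ5 d a b) k B"
  shows "\<exists>w s t. window_factor k B w s t \<and> w ` {..<k} = {..<5} \<and> 5 \<le> k"
proof -
  have "(\<Sum>l<k. horn_form (\<lambda>i. B i l)) = 0"
    using sum_horn_form_columns[OF A] horn by (simp add: circ5_def)
  then obtain w s t where B: "window_factor k B w s t"
    using window_factor_exists[OF nonneg] by blast
  have "\<forall>i<5. circ5 d a b i ((i + 2) mod 5) \<noteq> 0"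
    using b circ5_shift2 by metis
  then have w: "w ` {..<k} = {..<5}" by (rule window_factor_image[OF B A])
  have "card (w ` {..<k}) \<le> k" using card_image_le[of "{..<k}" w] by simp
  then show ?thesis using B w by auto
qed

lemma sum_offdiag_window_factor:
  assumes B: "window_factor k B w s t" and A: "is_BBT 5 A k B"
  shows "(\<Sum>i<5. A i ((i + 1) mod 5)) = (\<Sum>l<k. (s l + t l)\<^sup>2)"
    and "(\<Sum>i<5. A i ((i + 2) mod 5)) = (\<Sum>l<k. s l * t l)"
proof -
  have col: "\<And>l i. l < k \<Longrightarrow> i < 5 \<Longrightarrow> B i l = window (w l) (s l) (t l) i"
    and w: "\<And>l. l < k \<Longrightarrow> w l < 5" using B by (auto simp: window_factor_def)
  have swap: "(\<Sum>i<5. A i ((i + m) mod 5))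
    = (\<Sum>l<k. \<Sum>i<5. window (w l) (s l) (t l) i * window (w l) (s l) (t l) ((i + m) mod 5))" for m
  proof -
    have "(\<Sum>i<5. A i ((i + m) mod 5)) = (\<Sum>i<5. \<Sum>l<k. B i l * B ((i + m) mod 5) l)"
      using A by (intro sum.cong) (auto simp: is_BBT_def)
    also have "\<dots> = (\<Sum>l<k. \<Sum>i<5. B i l * B ((i + m) mod 5) l)" by (rule sum.swap)
    finally show ?thesis using col by (auto intro!: sum.cong)
  qed
  show "(\<Sum>i<5. A i ((i + 1) mod 5)) = (\<Sum>l<k. (s l + t l)\<^sup>2)"
    unfolding swap using w sum_window_mult_shift1 by (auto intro!: sum.cong)
  show "(\<Sum>i<5. A i ((i + 2) mod 5)) = (\<Sum>l<k. s l * t l)"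
    unfolding swap using w sum_window_mult_shift2 by (auto intro!: sum.cong)
qed

lemma window_factor_cols_lin_indep:
  assumes B: "window_factor k B w s t" and l: "l < k" "l' < k"
    and c: "(w l \<noteq> w l' \<and> s l \<noteq> 0 \<and> s l' \<noteq> 0) \<or> (w l = w l' \<and> s l * t l' \<noteq> t l * s l')"
  shows "cols_lin_indep 5 B l l'"
proof -
  have w: "w l < 5" "w l' < 5" using B l by (auto simp: window_factor_def)
  have col: "\<And>i. i < 5 \<Longrightarrow> B i l = window (w l) (s l) (t l) i"
    "\<And>i. i < 5 \<Longrightarrow> B i l' = window (w l') (s l') (t l') i"
    using B l by (auto simp: window_factor_def)
  from c show ?thesis
  proof
    assume h: "w l \<noteq> w l' \<and> s l \<noteq> 0 \<and> s l' \<noteq> 0"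
    have "B (w l') l * B (w l) l' = 0"
      using col(1)[OF w(2)] col(2)[OF w(1)] window_mult_window_eq_0[OF w] h by simp
    moreover have "B (w l) l * B (w l') l' = s l * s l'"
      using col(1)[OF w(1)] col(2)[OF w(2)] by (simp add: window_def)
    ultimately show ?thesis using w h by (intro cols_lin_indep_of_minor[of "w l" _ "w l'"]) auto
  next
    assume h: "w l = w l' \<and> s l * t l' \<noteq> t l * s l'"
    define i where "i = (w l + 2) mod 5"
    have "i < 5" "i \<noteq> w l" "i \<noteq> Suc (w l) mod 5" "i = Suc (Suc (w l)) mod 5"
      using less_5_cases[OF w(1)] unfolding i_def by auto
    then have "B (w l) l * B i l' \<noteq> B i l * B (w l) l'"
      using h col(1)[OF w(1)] col(2)[OF w(1)] col(1)[of i] col(2)[of i] by (simp add: window_def)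
    then show ?thesis using w \<open>i < 5\<close> by (intro cols_lin_indep_of_minor) auto
  qed
qed

definition window_gram :: "(nat \<Rightarrow> real) \<Rightarrow> (nat \<Rightarrow> real) \<Rightarrow> nat \<Rightarrow> nat \<Rightarrow> real" where
  "window_gram \<sigma> \<tau> i i' = (\<Sum>j<5. window j (\<sigma> j) (\<tau> j) i * window j (\<sigma> j) (\<tau> j) i')"

lemma window_factor_reindex:
  assumes B: "window_factor 5 B w s t" and A: "is_BBT 5 A 5 B" and w: "w ` {..<5} = {..<5}"
  obtains \<sigma> \<tau> where "\<forall>j<5. \<sigma> j \<ge> 0 \<and> \<tau> j \<ge> 0"
    and "\<forall>i<5. \<forall>i'<5. A i i' = window_gram \<sigma> \<tau> i i'"
    and "\<forall>l<5. s l = \<sigma> (w l) \<and> t l = \<tau> (w l)"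
proof -
  have inj: "inj_on w {..<5}" using w by (intro eq_card_imp_inj_on) auto
  have bij: "bij_betw w {..<5} {..<5}" using inj w by (simp add: bij_betw_def)
  define g where "g = inv_into {..<5} w"
  have g: "bij_betw g {..<5} {..<5}" unfolding g_def by (rule bij_betw_inv_into[OF bij])
  have gw: "\<And>l. l < 5 \<Longrightarrow> g (w l) = l" unfolding g_def using inj by (simp add: inv_into_f_f)
  have wg: "\<And>j. j < 5 \<Longrightarrow> w (g j) = j" unfolding g_def using w by (simp add: f_inv_into_f)
  have g5: "\<And>j. j < 5 \<Longrightarrow> g j < 5" using g by (auto simp: bij_betw_def)
  define \<sigma> where "\<sigma> j = s (g j)" for j
  define \<tau> where "\<tau> j = t (g j)" for j
  have col: "\<And>i j. i < 5 \<Longrightarrow> j < 5 \<Longrightarrow> B i (g j) = window j (\<sigma> j) (\<tau> j) i"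
    using B g5 wg unfolding window_factor_def \<sigma>_def \<tau>_def by metis
  have "A i i' = window_gram \<sigma> \<tau> i i'" if "i < 5" "i' < 5" for i i'
  proof -
    have "A i i' = (\<Sum>l<5. B i l * B i' l)" using A that by (simp add: is_BBT_def)
    also have "\<dots> = (\<Sum>j<5. B i (g j) * B i' (g j))"
      using sum.reindex_bij_betw[OF g, of "\<lambda>l. B i l * B i' l"] by simp
    also have "\<dots> = window_gram \<sigma> \<tau> i i'"
      unfolding window_gram_def using col that by (intro sum.cong) auto
    finally show ?thesis .
  qed
  moreover have "\<forall>j<5. \<sigma> j \<ge> 0 \<and> \<tau> j \<ge> 0" using B g5 by (simp add: window_factor_def \<sigma>_def \<tau>_def)
  moreover have "\<forall>l<5. s l = \<sigma> (w l) \<and> t l = \<tau> (w l)" using gw by (simp add: \<sigma>_def \<tau>_def)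
  ultimately show ?thesis using that by blast
qed

lemma window_gram_shift2:
  assumes "j < 5"
  shows "window_gram \<sigma> \<tau> j ((j + 2) mod 5) = \<sigma> j * \<tau> j"
  using less_5_cases[OF assms] by (elim disjE; simp add: window_gram_def sum_lessThan_5 window_def)

lemma window_gram_shift1:
  assumes "j < 5"
  shows "window_gram \<sigma> \<tau> ((j + 1) mod 5) ((j + 2) mod 5)
    = \<sigma> ((j + 1) mod 5) * (\<sigma> ((j + 1) mod 5) + \<tau> ((j + 1) mod 5)) + (\<sigma> j + \<tau> j) * \<tau> j"
  using less_5_cases[OF assms]
  by (elim disjE; simp add: window_gram_def sum_lessThan_5 window_def numeral_2_eq_2)


definition circ_factor :: "real \<Rightarrow> real \<Rightarrow> nat \<Rightarrow> nat \<Rightarrow> real" where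
  "circ_factor a b i j = (if i < 5 \<and> j < 5 then window j a b i else 0)"

lemma circ_factor_window_factor:
  "a \<ge> 0 \<Longrightarrow> b \<ge> 0 \<Longrightarrow> window_factor 5 (circ_factor a b) (\<lambda>l. l) (\<lambda>_. a) (\<lambda>_. b)"
  by (simp add: window_factor_def circ_factor_def)

lemma circ_factor_is_BBT:
  "is_BBT 5 (circ5 (a\<^sup>2 + (a + b)\<^sup>2 + b\<^sup>2) (a * (a + b) + (a + b) * b) (a * b)) 5 (circ_factor a b)"
  unfolding is_BBT_def
proof (intro allI impI)
  fix i j :: nat assume "i < 5" "j < 5"
  then show "circ5 (a\<^sup>2 + (a + b)\<^sup>2 + b\<^sup>2) (a * (a + b) + (a + b) * b) (a * b) i j
    = (\<Sum>l<5. circ_factor a b i l * circ_factor a b j l)"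
    using less_5_cases[OF \<open>i < 5\<close>] less_5_cases[OF \<open>j < 5\<close>]
    by (elim disjE;
        simp add: sum_lessThan_5 circ_factor_def window_def circ5_def power2_eq_square algebra_simps)
qed

lemma circ_factor_cp_factorization:
  assumes "a > 0" "b > 0"
  shows "(5, circ_factor a b)
    \<in> cp_factorizations 5 (circ5 (a\<^sup>2 + (a + b)\<^sup>2 + b\<^sup>2) (a * (a + b) + (a + b) * b) (a * b))"
proof -
  have B: "window_factor 5 (circ_factor a b) (\<lambda>l. l) (\<lambda>_. a) (\<lambda>_. b)"
    using assms by (simp add: circ_factor_window_factor)
  have "nonneg_mat 5 5 (circ_factor a b)"
    using assms by (simp add: nonneg_mat_def circ_factor_def window_def)
  moreover have "\<forall>j<5. \<forall>j'<5. j \<noteq> j' \<longrightarrow> cols_lin_indep 5 (circ_factor a b) j j'"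
    using window_factor_cols_lin_indep[OF B] assms by auto
  ultimately show ?thesis
    using circ_factor_is_BBT by (simp add: cp_factorizations_def circ_factor_def)
qed

lemma W5sq_eq_circ_factor: "W5sq = circ_factor 1 1"
proof (intro ext)
  fix i j
  show "W5sq i j = circ_factor 1 1 i j"
  proof (cases "i < 5 \<and> j < 5")
    case True
    then have "i < 5" "j < 5" by simp_all
    then show ?thesis
      using less_5_cases[OF \<open>i < 5\<close>] less_5_cases[OF \<open>j < 5\<close>]
      by (elim disjE; simp add: W5sq_def W5_def circ_factor_def window_def sum_lessThan_5)
  qed (auto simp: W5sq_def circ_factor_def)
qed

section \<open>Golden weights\<close>

definition phi :: real where "phi = (1 + sqrt 5) / 2"
definition psi :: real where "psi = (sqrt 5 - 1) / 2"

lemma phi_pos: "phi > 0"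
  by (simp add: phi_def add_pos_nonneg)

lemma psi_pos: "psi > 0"
  by (simp add: psi_def real_less_rsqrt)

lemma phi_mult_psi: "phi * psi = 1"
  by (simp add: phi_def psi_def field_simps)

lemma phi_sq_plus_psi_sq: "phi\<^sup>2 + psi\<^sup>2 = 3"
  by (simp add: phi_def psi_def power2_eq_square field_simps)

lemma phi_plus_psi_sq: "(phi + psi)\<^sup>2 = 5"
proof -
  have "phi + psi = sqrt 5" by (simp add: phi_def psi_def field_simps)
  then show ?thesis by simp
qed

lemma phi_sq_neq_psi_sq: "phi\<^sup>2 \<noteq> psi\<^sup>2"
  by (simp add: phi_def psi_def power2_eq_square field_simps)

lemma quadratic_golden_roots:
  fixes x :: real
  assumes "x\<^sup>2 - 3 * x + 1 = 0"
  shows "x = phi\<^sup>2 \<or> x = psi\<^sup>2"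
proof -
  have "(x - phi\<^sup>2) * (x - psi\<^sup>2) = x\<^sup>2 - 3 * x + 1"
    by (simp add: phi_def psi_def power2_eq_square field_simps)
  then show ?thesis using assms by simp
qed

lemma periodic_orbit_not_increasing:
  fixes f :: "'a::linorder \<Rightarrow> 'a"
  assumes mono: "strict_mono_on S f" and n: "n > 0"
    and orbit: "\<And>j. j < n \<Longrightarrow> u j \<in> S" "\<And>j. j < n \<Longrightarrow> f (u j) = u (Suc j mod n)"
  shows "\<not> u 0 < f (u 0)"
proof
  assume start: "u 0 < f (u 0)"
  have up: "u j < f (u j) \<and> u 0 \<le> u j" if "j < n" for j
    using that
  proof (induction j)
    case (Suc j)
    then have "u (Suc j) = f (u j)" "u j \<in> S" "u (Suc j) \<in> S" using orbit by auto
    then show ?case using Suc mono by (auto simp: strict_mono_on_def)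
  qed (use start in simp)
  have "u 0 \<le> u (n - 1)" "u (n - 1) < f (u (n - 1))" using up[of "n - 1"] n by auto
  moreover have "f (u (n - 1)) = u 0" using orbit(2)[of "n - 1"] n by simp
  ultimately show False by simp
qed

lemma periodic_orbit_strict_mono_const:
  fixes f :: "real \<Rightarrow> real"
  assumes mono: "strict_mono_on S f" and n: "n > 0"
    and orbit: "\<And>j. j < n \<Longrightarrow> u j \<in> S" "\<And>j. j < n \<Longrightarrow> f (u j) = u (Suc j mod n)"
  shows "f (u 0) = u 0" and "\<forall>j<n. u j = u 0"
proof -
  have "\<not> u 0 < f (u 0)" by (rule periodic_orbit_not_increasing[of S f n u]) (use assms in auto)
  \<comment> \<open>the decreasing case is the increasing one for \<open>x \<mapsto> - f (- x)\<close>\<close>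
  moreover have "\<not> - u 0 < - f (- (- u 0))"
  proof (rule periodic_orbit_not_increasing[where S = "uminus ` S" and u = "\<lambda>j. - u j"])
    show "strict_mono_on (uminus ` S) (\<lambda>x. - f (- x))"
      using mono by (auto simp: strict_mono_on_def)
  qed (use n orbit in auto)
  ultimately show fixed: "f (u 0) = u 0" by simp
  show "\<forall>j<n. u j = u 0"
  proof (intro allI impI)
    fix j assume "j < n"
    then show "u j = u 0"
    proof (induction j)
      case (Suc j)
      then have "u (Suc j) = f (u j)" using orbit(2)[of j] by simp
      then show ?case using Suc fixed by simp
    qed simp
  qed
qed

text \<open>With \<open>u j = \<sigma> j\<^sup>2\<close> the hypotheses say \<open>u (j + 1) = 3 - 1 / u j\<close>, an increasing map
  on the positive reals, so the orbit \<open>u\<close> is a fixed point.\<close>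
lemma golden_weights:
  fixes \<sigma> \<tau> :: "nat \<Rightarrow> real"
  assumes nonneg: "\<forall>j<5. \<sigma> j \<ge> 0 \<and> \<tau> j \<ge> 0" and prod: "\<forall>j<5. \<sigma> j * \<tau> j = 1"
    and adj: "\<forall>j<5. (\<sigma> ((j + 1) mod 5))\<^sup>2 + (\<tau> j)\<^sup>2 = 3"
  shows "(\<forall>j<5. \<sigma> j = phi \<and> \<tau> j = psi) \<or> (\<forall>j<5. \<sigma> j = psi \<and> \<tau> j = phi)"
proof -
  define u where "u j = (\<sigma> j)\<^sup>2" for j
  define f where "f x = 3 - 1 / x" for x :: real
  have u: "u j \<in> {0<..}" if "j < 5" for j
  proof -
    have "\<sigma> j \<noteq> 0" using prod that by auto
    then show ?thesis by (simp add: u_def)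
  qed
  have orbit: "f (u j) = u (Suc j mod 5)" if "j < 5" for j
  proof -
    have "u j * (\<tau> j)\<^sup>2 = 1" using prod that by (simp add: u_def power_mult_distrib[symmetric])
    then have "(\<tau> j)\<^sup>2 = 1 / u j"
      by (metis mult.commute nonzero_eq_divide_eq zero_neq_one mult_zero_left)
    moreover have "(\<sigma> (Suc j mod 5))\<^sup>2 + (\<tau> j)\<^sup>2 = 3" using adj that by simp
    ultimately show ?thesis by (simp add: f_def u_def)
  qed
  have mono: "strict_mono_on {0<..} f"
  proof (rule strict_mono_onI)
    fix x y :: real assume "x \<in> {0<..}" "x < y"
    then have "1 / y < 1 / x" using divide_strict_left_mono[of x y 1] by simp
    then show "f x < f y" by (simp add: f_def)
  qed
  have five: "0 < (5::nat)" by simp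
  note periodic = periodic_orbit_strict_mono_const[of _ f 5 u, OF mono five u orbit]
  have "u 0 > 0" using u[OF five] by simp
  then have "(u 0)\<^sup>2 - 3 * u 0 + 1 = 0"
    using periodic(1) by (simp add: f_def power2_eq_square field_simps)
  then have "u 0 = phi\<^sup>2 \<or> u 0 = psi\<^sup>2" by (rule quadratic_golden_roots)
  moreover have weights: "\<forall>j<5. \<sigma> j = r \<and> \<tau> j = 1 / r" if "r > 0" "u 0 = r\<^sup>2" for r
  proof (intro allI impI)
    fix j :: nat assume j: "j < 5"
    have "u j = u 0" using periodic(2) j by blast
    then have "(\<sigma> j)\<^sup>2 = r\<^sup>2" using that by (simp add: u_def)
    then have "\<sigma> j = r" using nonneg j that by (simp add: power2_eq_iff_nonneg)
    moreover have "\<sigma> j * \<tau> j = 1" using prod j by simp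
    ultimately show "\<sigma> j = r \<and> \<tau> j = 1 / r" using that by (simp add: eq_divide_eq mult.commute)
  qed
  moreover have "1 / phi = psi" "1 / psi = phi"
    using phi_mult_psi phi_pos psi_pos by (simp_all add: field_simps)
  ultimately show ?thesis using weights[OF phi_pos] weights[OF psi_pos] by metis
qed


section \<open>The matrix \<open>circ5 8 5 1\<close>\<close>

lemma golden_circ_factor_cp_factorization:
  "(5, circ_factor phi psi) \<in> cp_factorizations 5 (circ5 8 5 1)"
  "(5, circ_factor psi phi) \<in> cp_factorizations 5 (circ5 8 5 1)"
proof -
  have "phi * (phi + psi) + (phi + psi) * psi = (phi + psi)\<^sup>2"
    by (simp add: power2_eq_square algebra_simps)
  then have "phi\<^sup>2 + (phi + psi)\<^sup>2 + psi\<^sup>2 = 8" "phi * (phi + psi) + (phi + psi) * psi = 5"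
    using phi_sq_plus_psi_sq phi_plus_psi_sq by simp_all
  then show "(5, circ_factor phi psi) \<in> cp_factorizations 5 (circ5 8 5 1)"
    "(5, circ_factor psi phi) \<in> cp_factorizations 5 (circ5 8 5 1)"
    using circ_factor_cp_factorization[OF phi_pos psi_pos]
      circ_factor_cp_factorization[OF psi_pos phi_pos] phi_mult_psi by (simp_all add: ac_simps)
qed

lemma cp_rank_circ5_eq_5:
  assumes "d + 2 * b = 2 * a" "b \<noteq> 0" "(5, B) \<in> cp_factorizations 5 (circ5 d a b)"
  shows "cp_rank 5 (circ5 d a b) = 5"
  unfolding cp_rank_def
proof (rule Least_equality)
  show "\<exists>B. nonneg_mat 5 5 B \<and> is_BBT 5 (circ5 d a b) 5 B"
    using assms(3) by (auto simp: cp_factorizations_def)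
  show "5 \<le> k" if "\<exists>B. nonneg_mat 5 k B \<and> is_BBT 5 (circ5 d a b) k B" for k
    using that circ5_window_factor[OF assms(1,2)] by blast
qed

lemma five_column_factor_circ5_8_5_1:
  assumes nonneg: "nonneg_mat 5 5 B" and A: "is_BBT 5 (circ5 8 5 1) 5 B"
  shows "((5, circ_factor phi psi), (5, B)) \<in> cp_equiv 5
    \<or> ((5, circ_factor psi phi), (5, B)) \<in> cp_equiv 5"
proof -
  obtain w s t where B: "window_factor 5 B w s t" and w: "w ` {..<5} = {..<5}"
    using circ5_window_factor[OF _ _ nonneg A] by auto
  obtain \<sigma> \<tau> where weights: "\<forall>j<5. \<sigma> j \<ge> 0 \<and> \<tau> j \<ge> 0"
    and gram: "\<forall>i<5. \<forall>i'<5. circ5 8 5 1 i i' = window_gram \<sigma> \<tau> i i'"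
    and st: "\<forall>l<5. s l = \<sigma> (w l) \<and> t l = \<tau> (w l)"
    using window_factor_reindex[OF B A w] by blast
  have prod: "\<forall>j<5. \<sigma> j * \<tau> j = 1"
    using gram window_gram_shift2 circ5_shift2 by (metis mod_less_divisor zero_less_numeral)
  have "\<forall>j<5. (\<sigma> ((j + 1) mod 5))\<^sup>2 + (\<tau> j)\<^sup>2 = 3"
  proof (intro allI impI)
    fix j :: nat assume j: "j < 5"
    have "circ5 8 5 1 ((j + 1) mod 5) ((j + 2) mod 5)
      = window_gram \<sigma> \<tau> ((j + 1) mod 5) ((j + 2) mod 5)"
      using gram by simp
    then have "5 = \<sigma> ((j + 1) mod 5) * (\<sigma> ((j + 1) mod 5) + \<tau> ((j + 1) mod 5)) + (\<sigma> j + \<tau> j) * \<tau> j"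
      unfolding circ5_shift1[OF j] window_gram_shift1[OF j] .
    moreover have "\<sigma> ((j + 1) mod 5) * \<tau> ((j + 1) mod 5) = 1" "\<sigma> j * \<tau> j = 1"
      using prod j by simp_all
    ultimately show "(\<sigma> ((j + 1) mod 5))\<^sup>2 + (\<tau> j)\<^sup>2 = 3"
      by (simp add: power2_eq_square algebra_simps)
  qed
  then have golden: "(\<forall>j<5. \<sigma> j = phi \<and> \<tau> j = psi) \<or> (\<forall>j<5. \<sigma> j = psi \<and> \<tau> j = phi)"
    by (rule golden_weights[OF weights prod])
  have "((5, circ_factor a b), (5, B)) \<in> cp_equiv 5" if ab: "\<forall>j<5. \<sigma> j = a \<and> \<tau> j = b" for a b
  proof (rule cp_equiv_reindexI[OF w], intro allI impI)
    fix i j :: nat assume "i < 5" "j < 5"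
    moreover have "w j < 5" using w \<open>j < 5\<close> by auto
    ultimately show "B i j = circ_factor a b i (w j)"
      using B st ab by (simp add: window_factor_def circ_factor_def)
  qed
  then show ?thesis using golden by blast
qed

lemma golden_circ_factors_not_equiv:
  "((5, circ_factor phi psi), (5, circ_factor psi phi)) \<notin> cp_equiv 5"
proof
  assume "((5, circ_factor phi psi), (5, circ_factor psi phi)) \<in> cp_equiv 5"
  then obtain p where p: "p permutes {..<5}"
    and eq: "\<forall>i<5. \<forall>j<5. circ_factor psi phi i j = circ_factor phi psi i (p j)"
    by (auto simp: cp_equiv_def)
  have p0: "p 0 < 5" using permutes_in_image[OF p] by simp
  have "\<forall>i<5. window 0 psi phi i = window (p 0) phi psi i"
    using eq p0 by (simp add: circ_factor_def)
  then have "psi = phi" using window_eq_windowD[OF zero_less_numeral p0 psi_pos phi_pos] by blast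
  then show False using phi_sq_neq_psi_sq by simp
qed

definition mix_factor ::
  "nat \<Rightarrow> real \<Rightarrow> (nat \<Rightarrow> nat \<Rightarrow> real) \<Rightarrow> (nat \<Rightarrow> nat \<Rightarrow> real) \<Rightarrow> nat \<Rightarrow> nat \<Rightarrow> real" where
  "mix_factor k x B C i l = (if l < k then sqrt x * B i l
     else if l < k + k then sqrt (1 - x) * C i (l - k) else 0)"

lemma sum_lessThan_add_self: "(\<Sum>l<(k::nat) + k. f l) = (\<Sum>l<k. f l) + (\<Sum>l<k. f (l + k) :: real)"
  by (simp add: lessThan_atLeast0 sum.atLeastLessThan_concat[of 0 k "k + k", symmetric]
      sum.shift_bounds_nat_ivl[of f 0 k k, simplified])

lemma mix_factor_is_BBT:
  assumes B: "is_BBT n A k B" and C: "is_BBT n A k C" and x: "0 \<le> x" "x \<le> 1"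
  shows "is_BBT n A (k + k) (mix_factor k x B C)"
  unfolding is_BBT_def
proof (intro allI impI)
  fix i j assume ij: "i < n" "j < n"
  have "(\<Sum>l<k + k. mix_factor k x B C i l * mix_factor k x B C j l)
      = (\<Sum>l<k. x * (B i l * B j l)) + (\<Sum>l<k. (1 - x) * (C i l * C j l))"
  proof -
    have "sqrt x * sqrt x = x" "sqrt (1 - x) * sqrt (1 - x) = 1 - x" using x by simp_all
    then show ?thesis
      unfolding sum_lessThan_add_self by (intro arg_cong2[where f = "(+)"] sum.cong)
        (auto simp: mix_factor_def algebra_simps)
  qed
  also have "\<dots> = x * A i j + (1 - x) * A i j"
  proof -
    have "(\<Sum>l<k. B i l * B j l) = A i j" "(\<Sum>l<k. C i l * C j l) = A i j"
      using B C ij by (simp_all add: is_BBT_def)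
    then show ?thesis by (simp only: sum_distrib_left[symmetric])
  qed
  also have "\<dots> = A i j" by (simp add: algebra_simps)
  finally show "A i j = (\<Sum>l<k + k. mix_factor k x B C i l * mix_factor k x B C j l)" ..
qed

abbreviation golden_mix :: "real \<Rightarrow> nat \<Rightarrow> nat \<Rightarrow> real" where
  "golden_mix x \<equiv> mix_factor 5 x (circ_factor phi psi) (circ_factor psi phi)"

lemma golden_mix_window_factor:
  assumes "0 < x" "x < 1"
  shows "window_factor 10 (golden_mix x) (\<lambda>l. l mod 5)
    (\<lambda>l. if l < 5 then sqrt x * phi else sqrt (1 - x) * psi)
    (\<lambda>l. if l < 5 then sqrt x * psi else sqrt (1 - x) * phi)"
  unfolding window_factor_def
proof (intro allI impI conjI)
  fix l :: nat assume l: "l < 10"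
  show "l mod 5 < 5" by simp
  show "0 \<le> (if l < 5 then sqrt x * phi else sqrt (1 - x) * psi)"
    "0 \<le> (if l < 5 then sqrt x * psi else sqrt (1 - x) * phi)"
    using assms phi_pos psi_pos by simp_all
  show "golden_mix x i l = window (l mod 5) (if l < 5 then sqrt x * phi else sqrt (1 - x) * psi)
    (if l < 5 then sqrt x * psi else sqrt (1 - x) * phi) i" if "i < 5" for i
  proof (cases "l < 5")
    case False
    then have "l mod 5 = l - 5" "l - 5 < 5" using l by (simp_all add: le_mod_geq)
    then show ?thesis using that l False by (simp add: mix_factor_def circ_factor_def mult_window)
  qed (use that in \<open>simp add: mix_factor_def circ_factor_def mult_window\<close>)
qed

lemma golden_mix_cp_factorization:
  assumes x: "0 < x" "x < 1"
  shows "(10, golden_mix x) \<in> cp_factorizations 5 (circ5 8 5 1)"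
proof -
  define s t where "s = (\<lambda>l::nat. if l < 5 then sqrt x * phi else sqrt (1 - x) * psi)"
    and "t = (\<lambda>l::nat. if l < 5 then sqrt x * psi else sqrt (1 - x) * phi)"
  have B: "window_factor 10 (golden_mix x) (\<lambda>l. l mod 5) s t"
    unfolding s_def t_def by (rule golden_mix_window_factor[OF x])
  have "nonneg_mat 5 10 (golden_mix x)"
    using B by (auto simp: nonneg_mat_def window_factor_def window_def)
  moreover have "is_BBT 5 (circ5 8 5 1) 10 (golden_mix x)"
    using mix_factor_is_BBT[of 5 _ 5] golden_circ_factor_cp_factorization x
    by (simp add: cp_factorizations_def)
  moreover have "cols_lin_indep 5 (golden_mix x) l l'" if l: "l < 10" "l' < 10" "l \<noteq> l'" for l l'
  proof (rule window_factor_cols_lin_indep[OF B l(1,2)])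
    have pos: "sqrt x > 0" "sqrt (1 - x) > 0" using x by simp_all
    show "(l mod 5 \<noteq> l' mod 5 \<and> s l \<noteq> 0 \<and> s l' \<noteq> 0)
      \<or> (l mod 5 = l' mod 5 \<and> s l * t l' \<noteq> t l * s l')"
    proof (cases "l mod 5 = l' mod 5")
      case True
      then have "(l < 5) \<noteq> (l' < 5)"
        using l by (cases "l < 5"; cases "l' < 5") (simp_all add: le_mod_geq)
      moreover have "sqrt x * phi * (sqrt (1 - x) * phi) \<noteq> sqrt x * psi * (sqrt (1 - x) * psi)"
        using pos phi_sq_neq_psi_sq by (simp add: power2_eq_square)
      ultimately show ?thesis using True by (cases "l < 5") (simp_all add: s_def t_def ac_simps)
    qed (use pos phi_pos psi_pos in \<open>simp add: s_def\<close>)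
  qed
  moreover have "golden_mix x i j = 0" if "\<not> (i < 5 \<and> j < 10)" for i j
    using that by (auto simp: mix_factor_def circ_factor_def)
  ultimately show ?thesis by (simp add: cp_factorizations_def)
qed

lemma golden_mix_equiv_imp_eq:
  assumes x: "0 < x" "x < 1" and y: "0 < y" "y < 1"
    and eqv: "((10, golden_mix x), (10, golden_mix y)) \<in> cp_equiv 5"
  shows "x = y"
proof -
  obtain p where p: "p permutes {..<10}"
    and eq: "\<forall>i<5. \<forall>j<10. golden_mix y i j = golden_mix x i (p j)"
    using eqv by (auto simp: cp_equiv_def)
  define a b where "a = (if p 0 < 5 then sqrt x * phi else sqrt (1 - x) * psi)"
    and "b = (if p 0 < 5 then sqrt x * psi else sqrt (1 - x) * phi)"
  have "p 0 < 10" using permutes_in_image[OF p] by simp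
  have "window 0 (sqrt y * phi) (sqrt y * psi) i = window (p 0 mod 5) a b i" if "i < 5" for i
  proof -
    have "golden_mix y i 0 = window 0 (sqrt y * phi) (sqrt y * psi) i"
      using that by (simp add: mix_factor_def circ_factor_def mult_window)
    moreover have "golden_mix x i (p 0) = window (p 0 mod 5) a b i"
      using golden_mix_window_factor[OF x] that \<open>p 0 < 10\<close>
      unfolding window_factor_def a_def b_def by blast
    ultimately show ?thesis using eq that by simp
  qed
  then have ab: "sqrt y * phi = a" "sqrt y * psi = b"
    using window_eq_windowD[of 0 "p 0 mod 5" "sqrt y * phi" "sqrt y * psi" a b] y phi_pos psi_pos
    by auto
  show ?thesis
  proof (cases "p 0 < 5")
    case True
    then show ?thesis using ab phi_pos by (simp add: a_def)
  next
    case False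
    then have e: "sqrt y * phi = sqrt (1 - x) * psi" "sqrt y * psi = sqrt (1 - x) * phi"
      using ab by (simp_all add: a_def b_def)
    have "sqrt y * phi * phi = sqrt y * psi * psi"
      unfolding e by (simp add: ac_simps)
    then have "sqrt y * (phi * phi) = sqrt y * (psi * psi)" by (simp add: mult.assoc)
    then have "phi * phi = psi * psi" using y by simp
    then show ?thesis using phi_sq_neq_psi_sq by (simp add: power2_eq_square)
  qed
qed

lemma infinite_cp_factorizations_circ5_8_5_1:
  "infinite (cp_factorizations 5 (circ5 8 5 1) // cp_equiv 5)"
proof
  let ?class = "\<lambda>x. cp_equiv 5 `` {(10, golden_mix x)}"
  assume fin: "finite (cp_factorizations 5 (circ5 8 5 1) // cp_equiv 5)"
  have "?class ` {0<..<1} \<subseteq> cp_factorizations 5 (circ5 8 5 1) // cp_equiv 5"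
    using golden_mix_cp_factorization by (auto intro: quotientI)
  moreover have "inj_on ?class {0<..<1}"
  proof (rule inj_onI)
    fix x y :: real assume "x \<in> {0<..<1}" "y \<in> {0<..<1}" "?class x = ?class y"
    then show "x = y"
      using golden_mix_equiv_imp_eq equiv_class_eq_iff[OF equiv_cp_equiv] by auto
  qed
  ultimately have "finite {0<..<(1::real)}"
    using fin by (metis finite_imageD finite_subset)
  then show False using infinite_Ioo[of "0::real" 1] by simp
qed


lemma card_minimal_cp_factorizations_circ5_8_5_1:
  "card (minimal_cp_factorizations 5 (circ5 8 5 1) // cp_equiv 5) = 2"
proof -
  let ?golden = "{(5, circ_factor phi psi), (5, circ_factor psi phi)}"
  have rank: "cp_rank 5 (circ5 8 5 1) = 5"
    using cp_rank_circ5_eq_5 golden_circ_factor_cp_factorization(1) by simp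
  have "minimal_cp_factorizations 5 (circ5 8 5 1) // cp_equiv 5 = (\<lambda>r. cp_equiv 5 `` {r}) ` ?golden"
  proof (rule quotient_cp_equiv_eq)
    show "?golden \<subseteq> minimal_cp_factorizations 5 (circ5 8 5 1)"
      using golden_circ_factor_cp_factorization rank by (simp add: minimal_cp_factorizations_def)
    show "\<exists>r\<in>?golden. (r, x) \<in> cp_equiv 5" if "x \<in> minimal_cp_factorizations 5 (circ5 8 5 1)" for x
      using that rank five_column_factor_circ5_8_5_1
      by (auto simp: minimal_cp_factorizations_def cp_factorizations_def)
  qed
  moreover have
    "cp_equiv 5 `` {(5, circ_factor phi psi)} \<noteq> cp_equiv 5 `` {(5, circ_factor psi phi)}"
    using golden_circ_factors_not_equiv equiv_class_eq_iff[OF equiv_cp_equiv] by blast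
  ultimately show ?thesis by simp
qed


section \<open>The matrix \<open>circ5 6 4 1\<close>\<close>

lemma W5sq_cp_factorization: "(5, W5sq) \<in> cp_factorizations 5 (circ5 6 4 1)"
  using circ_factor_cp_factorization[of 1 1] by (simp add: W5sq_eq_circ_factor power2_eq_square)

text \<open>Since \<open>(s + t)\<^sup>2 - 4 s t = (s - t)\<^sup>2\<close>, this ratio of the off-diagonal sums forces \<open>s = t\<close>.\<close>
lemma window_factor_balanced:
  assumes B: "window_factor k B w s t" and A: "is_BBT 5 A k B"
    and ratio: "(\<Sum>i<5. A i ((i + 1) mod 5)) = 4 * (\<Sum>i<5. A i ((i + 2) mod 5))"
  shows "\<forall>l<k. s l = t l"
proof -
  have "(\<Sum>l<k. (s l - t l)\<^sup>2) = (\<Sum>l<k. (s l + t l)\<^sup>2 - 4 * (s l * t l))"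
    by (intro sum.cong) (simp_all add: power2_eq_square algebra_simps)
  also have "\<dots> = 0"
    using sum_offdiag_window_factor[OF B A] ratio by (simp add: sum_subtractf sum_distrib_left)
  finally show ?thesis using sum_nonneg_eq_0_iff[of "{..<k}" "\<lambda>l. (s l - t l)\<^sup>2"] by simp
qed

lemma window_factor_balanced_inj:
  assumes B: "window_factor k B w s t" and st: "\<forall>l<k. s l = t l"
    and indep: "\<forall>j<k. \<forall>j'<k. j \<noteq> j' \<longrightarrow> cols_lin_indep 5 B j j'"
  shows "inj_on w {..<k}"
proof (rule inj_onI, rule ccontr)
  fix l l' assume l: "l \<in> {..<k}" "l' \<in> {..<k}" "w l = w l'" "l \<noteq> l'"
  then have indep_l: "cols_lin_indep 5 B l l'" using indep by auto
  have col: "B i l = s l * window (w l) 1 1 i" "B i l' = s l' * window (w l) 1 1 i" if "i < 5" for i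
    using B l st that by (simp_all add: window_factor_def mult_window)
  then have "s l' = 0 \<and> s l = 0"
    using indep_l[unfolded cols_lin_indep_def, rule_format, of "s l'" "- s l"] by simp
  then show False
    using col indep_l[unfolded cols_lin_indep_def, rule_format, of 1 0] by simp
qed

lemma cp_factorization_circ5_6_4_1_equiv:
  assumes "(k, B) \<in> cp_factorizations 5 (circ5 6 4 1)"
  shows "((5, W5sq), (k, B)) \<in> cp_equiv 5"
proof -
  have nonneg: "nonneg_mat 5 k B" and A: "is_BBT 5 (circ5 6 4 1) k B"
    and indep: "\<forall>j<k. \<forall>j'<k. j \<noteq> j' \<longrightarrow> cols_lin_indep 5 B j j'"
    using assms by (simp_all add: cp_factorizations_def)
  obtain w s t where B: "window_factor k B w s t" and w: "w ` {..<k} = {..<5}"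
    using circ5_window_factor[OF _ _ nonneg A] by auto
  have st: "\<forall>l<k. s l = t l"
    by (rule window_factor_balanced[OF B A]) (simp add: sum_lessThan_5 circ5_def)
  have "card {..<k} = card {..<5::nat}"
    using card_image[OF window_factor_balanced_inj[OF B st indep]] w by simp
  then have k: "k = 5" by simp
  have B5: "window_factor 5 B w s t" "is_BBT 5 (circ5 6 4 1) 5 B" "w ` {..<5} = {..<5}"
    using B A w k by simp_all
  obtain \<sigma> \<tau> where "\<forall>j<5. \<sigma> j \<ge> 0 \<and> \<tau> j \<ge> 0"
    and gram: "\<forall>i<5. \<forall>i'<5. circ5 6 4 1 i i' = window_gram \<sigma> \<tau> i i'"
    and weights: "\<forall>l<5. s l = \<sigma> (w l) \<and> t l = \<tau> (w l)"
    by (rule window_factor_reindex[OF B5])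
  have one: "s l = 1" if "l < 5" for l
  proof -
    have "w l < 5" using w that k by auto
    then have "\<sigma> (w l) * \<tau> (w l) = 1"
      using gram window_gram_shift2 circ5_shift2[of "w l" 6 4 1] by simp
    then have "s l * s l = 1" using st weights that k by simp
    then have "(s l - 1) * (s l + 1) = 0" by (simp add: algebra_simps)
    moreover have "s l \<ge> 0" using B that k by (simp add: window_factor_def)
    ultimately show "s l = 1" by simp
  qed
  show ?thesis unfolding k W5sq_eq_circ_factor
  proof (rule cp_equiv_reindexI[OF w[unfolded k]], intro allI impI)
    fix i j :: nat assume "i < 5" "j < 5"
    moreover have "w j < 5" using w \<open>j < 5\<close> k by auto
    ultimately show "B i j = circ_factor 1 1 i (w j)"
      using B st one k by (simp add: window_factor_def circ_factor_def)
  qed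
qed

lemma cp_factorizations_circ5_6_4_1_quotient:
  "cp_factorizations 5 (circ5 6 4 1) // cp_equiv 5 = {cp_equiv 5 `` {(5, W5sq)}}"
  using quotient_cp_equiv_eq[of "{(5, W5sq)}"] W5sq_cp_factorization
    cp_factorization_circ5_6_4_1_equiv by auto

theorem mainTheorem10:
  shows "completely_positive 5 (circ5 8 5 1)
    \<and> card (minimal_cp_factorizations 5 (circ5 8 5 1) // cp_equiv 5) = 2
    \<and> infinite (cp_factorizations 5 (circ5 8 5 1) // cp_equiv 5)
    \<and> completely_positive 5 (circ5 6 4 1)
    \<and> cp_factorizations 5 (circ5 6 4 1) // cp_equiv 5
        = {cp_equiv 5 `` {(5, W5sq)}}"
  using completely_positiveI golden_circ_factor_cp_factorization W5sq_cp_factorization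
    card_minimal_cp_factorizations_circ5_8_5_1 infinite_cp_factorizations_circ5_8_5_1
    cp_factorizations_circ5_6_4_1_quotient by blast

end
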